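(* \begin{itemize} \item[{\rm a)}] The values of the fields $u$ and $v$ in the vertices of the zig--zag line running from the north--west to the south--east, \[ \Big\{\mathfrak{z}=k+\ell\omega: k+\ell=0,1\Big\}, \] uniquely determine the functions $u,v:V(\mathcal{T}\mathcal{L})\mapsto\mathbb C$ on the whole lattice. \item[{\rm b)}] The values of the fields $u$ and $v$ on the two positive semi-axes, \[ \Big\{\mathfrak{z}=k: k\ge 0\Big\}\cup\Big\{\mathfrak{z}=\ell\omega: \ell\ge 0\Big\}, \] uniquely determine the functions $u,v$ on the whole sector \[ \Big\{\mathfrak{z}=k+\ell\omega: k,\ell\ge 0\Big\}= \Big\{\mathfrak{z}\in V(\mathcal{T}\mathcal{L}): 0\le\arg(\mathfrak{z})\le2\pi/3\Big\}. \] \end{itemize}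
   Context: $V(\mathcal{T}\mathcal{L})=\{k+\ell\omega+m\omega^2\}$, $\omega=e^{2\pi i/3}$, is the vertex set of the regular triangular lattice. The functions $u,v:V(\mathcal{T}\mathcal{L})\to\mathbb C$ are required to solve the $fgh$--system, which in terms of $u,v$ reads \[ \frac{u(\mathfrak{z}_2)-u(\mathfrak{z}_1)}{u(\mathfrak{z}_3)-u(\mathfrak{z}_2)}=\frac{v(\mathfrak{z}_3)-v(\mathfrak{z}_2)}{v(\mathfrak{z}_1)-v(\mathfrak{z}_3)} \] for every elementary triangle with consecutive vertices $\mathfrak{z}_1,\mathfrak{z}_2,\mathfrak{z}_3$ such that $\mathfrak{z}_2-\mathfrak{z}_1,\mathfrak{z}_3-\mathfrak{z}_2,\mathfrak{z}_1-\mathfrak{z}_3\in\{1,\omega,\omega^2\}$. (Genericity assumed so that all divisions make sense.) *)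

theory Defs
  imports Complex_Main
begin

definition omega :: complex where
  "omega = exp (2 * of_real pi * \<i> / 3)"

definition TL :: "complex set" where
  "TL = {of_int k + of_int l * omega + of_int m * omega ^ 2 | k l m. True}"

definition fgh_system :: "(complex \<Rightarrow> complex) \<Rightarrow> (complex \<Rightarrow> complex) \<Rightarrow> bool" where
  "fgh_system u v \<longleftrightarrow>
     (\<forall>z1\<in>TL. \<forall>z2\<in>TL. \<forall>z3\<in>TL.
        z2 - z1 \<in> {1, omega, omega ^ 2} \<and> z3 - z2 \<in> {1, omega, omega ^ 2} \<and>
        z1 - z3 \<in> {1, omega, omega ^ 2} \<longrightarrow>
        (u z2 - u z1) / (u z3 - u z2) = (v z3 - v z2) / (v z1 - v z3))"

text \<open>Genericity: the fields take pairwise distinct values at distinct vertices,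
  so that all divisions make sense.\<close>
definition generic_fields :: "(complex \<Rightarrow> complex) \<Rightarrow> (complex \<Rightarrow> complex) \<Rightarrow> bool" where
  "generic_fields u v \<longleftrightarrow> inj_on u TL \<and> inj_on v TL"

definition zigzag :: "complex set" where
  "zigzag = {of_int k + of_int l * omega | k l. k + l = 0 \<or> k + l = 1}"

definition semi_axes :: "complex set" where
  "semi_axes = {of_nat k | k. True} \<union> {of_nat l * omega | l. True}"

definition sector :: "complex set" where
  "sector = {of_nat k + of_nat l * omega | k l. True}"

end

theory Submission
  imports Defs
begin

text \<open>Cleared of denominators, the fgh-equation on an elementary triangle is a single bilinear
  relation in the values at any one of its vertices, of the form
  \<open>(u z - u c) * (v z - v a) = K\<close> with \<open>K\<close> known from the other two vertices.
  In a rhombus made of two triangles sharing the vertex \<open>c\<close>, the apex \<open>z\<close> opposite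
  to \<open>c\<close> satisfies two such relations; subtracting them determines \<open>u z\<close>, and
  then \<open>v z\<close>. Hence agreement of two solutions at three vertices of a rhombus spreads to
  the fourth, and an induction on \<open>k + l\<close> fills the half plane \<open>k + l \<ge> 0\<close> from
  the zig-zag line, or the sector from its two bounding semi-axes. The other half plane follows
  from the symmetry \<open>(u, v) \<mapsto> (v(1 - _), u(1 - _))\<close> of the fgh-system,
  which maps the zig-zag line onto itself.\<close>

lemma omega_eq: "omega = Complex (-1/2) (sqrt 3 / 2)"
proof -
  have "omega = exp (Re (2 * of_real pi * \<i> / 3)) * cis (Im (2 * of_real pi * \<i> / 3))"
    unfolding omega_def by (rule exp_eq_polar)
  also have "\<dots> = cis (2 * pi / 3)" by simp
  also have "\<dots> = Complex (-1/2) (sqrt 3 / 2)" by (simp add: cis.code cos_120 sin_120)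
  finally show ?thesis .
qed

lemma omega_squared: "omega ^ 2 = -1 - omega"
  unfolding omega_eq by (simp add: power2_eq_square complex_eq_iff)

lemma omega_neq: "omega \<noteq> 0" "omega \<noteq> 1" "omega \<noteq> -1"
  by (auto simp: omega_eq complex_eq_iff)

lemma zero_notin_lattice_steps: "0 \<notin> {1, omega, omega ^ 2}"
  using omega_neq by (auto simp: omega_squared)

definition lattice_pt :: "int \<Rightarrow> int \<Rightarrow> complex" where
  "lattice_pt i j = of_int i + of_int j * omega"

lemma TL_iff_lattice_pt: "z \<in> TL \<longleftrightarrow> (\<exists>i j. z = lattice_pt i j)"
proof
  assume "z \<in> TL"
  then obtain k l m :: int where "z = of_int k + of_int l * omega + of_int m * omega ^ 2"
    unfolding TL_def by blast
  then have "z = lattice_pt (k - m) (l - m)"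
    by (simp add: lattice_pt_def omega_squared algebra_simps)
  then show "\<exists>i j. z = lattice_pt i j" by blast
next
  assume "\<exists>i j. z = lattice_pt i j"
  then obtain i j where "z = of_int i + of_int j * omega + of_int 0 * omega ^ 2"
    unfolding lattice_pt_def by auto
  then show "z \<in> TL" unfolding TL_def by blast
qed

lemma lattice_pt_in_TL: "lattice_pt i j \<in> TL"
  using TL_iff_lattice_pt by blast

lemma one_in_TL: "1 \<in> TL" and omega_in_TL: "omega \<in> TL"
  using lattice_pt_in_TL[of 1 0] lattice_pt_in_TL[of 0 1] by (simp_all add: lattice_pt_def)

lemma TL_diff: "z \<in> TL \<Longrightarrow> w \<in> TL \<Longrightarrow> z - w \<in> TL"
  unfolding TL_iff_lattice_pt lattice_pt_def
  by (metis (no_types) of_int_diff left_diff_distrib add_diff_add)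

lemma lattice_pt_minus_one [simp]: "lattice_pt i j - 1 = lattice_pt (i - 1) j"
  and lattice_pt_minus_omega [simp]: "lattice_pt i j - omega = lattice_pt i (j - 1)"
  and one_minus_lattice_pt: "1 - lattice_pt i j = lattice_pt (1 - i) (- j)"
  by (simp_all add: lattice_pt_def algebra_simps)

lemma fgh_triangle_product_form:
  assumes "fgh_system u v" and "generic_fields u v"
    and "z1 \<in> TL" "z2 \<in> TL" "z3 \<in> TL"
    and "z2 - z1 \<in> {1, omega, omega ^ 2}" "z3 - z2 \<in> {1, omega, omega ^ 2}"
      "z1 - z3 \<in> {1, omega, omega ^ 2}"
  shows "(u z3 - u z1) * (v z3 - v z2) = (u z1 - u z2) * (v z2 - v z1)"
proof -
  have "z3 \<noteq> z2" "z1 \<noteq> z3"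
    using assms(7,8) zero_notin_lattice_steps by force+
  then have "u z3 - u z2 \<noteq> 0" "v z1 - v z3 \<noteq> 0"
    using assms(2-5) unfolding generic_fields_def inj_on_def by auto
  moreover have "(u z2 - u z1) / (u z3 - u z2) = (v z3 - v z2) / (v z1 - v z3)"
    using assms unfolding fgh_system_def by blast
  ultimately show ?thesis by (simp add: field_simps)
qed

lemma bilinear_pair_unique_solution:
  fixes x y x' y' a b c k l :: "'a::idom"
  assumes "(x - c) * (y - a) = k" "(x - c) * (y - b) = l"
    and "(x' - c) * (y' - a) = k" "(x' - c) * (y' - b) = l"
    and "a \<noteq> b" "k \<noteq> 0"
  shows "x = x' \<and> y = y'"
proof -
  have diff: "(s - c) * (b - a) = (s - c) * (t - a) - (s - c) * (t - b)" for s t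
    by (simp add: algebra_simps)
  have "(x - c) * (b - a) = (x' - c) * (b - a)"
    using diff[of x y] diff[of x' y'] assms(1-4) by simp
  then have "x = x'" using \<open>a \<noteq> b\<close> by simp
  moreover have "x - c \<noteq> 0" using assms(1,6) by auto
  ultimately have "y - a = y' - a" using assms(1,3) by (metis mult_left_cancel)
  with \<open>x = x'\<close> show ?thesis by simp
qed

definition agree_at ::
    "(complex \<Rightarrow> complex) \<Rightarrow> (complex \<Rightarrow> complex) \<Rightarrow> (complex \<Rightarrow> complex) \<Rightarrow>
     (complex \<Rightarrow> complex) \<Rightarrow> complex \<Rightarrow> bool" where
  "agree_at u v u' v' z \<longleftrightarrow> u z = u' z \<and> v z = v' z"

lemma rhombus_apex_agree:
  assumes fgh: "fgh_system u v" "fgh_system u' v'"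
    and gen: "generic_fields u v" "generic_fields u' v'"
    and "z \<in> TL"
    and agree: "agree_at u v u' v' (z - 1)" "agree_at u v u' v' (z - omega)"
      "agree_at u v u' v' (z - 1 - omega)"
  shows "agree_at u v u' v' z"
proof -
  define a d c where "a = z - 1" and "d = z - omega" and "c = z - 1 - omega"
  have TL: "a \<in> TL" "d \<in> TL" "c \<in> TL"
    using \<open>z \<in> TL\<close> by (simp_all add: a_def d_def c_def TL_diff one_in_TL omega_in_TL)
  have relations: "(f z - f c) * (g z - g a) = (f c - f a) * (g a - g c)"
      "(f z - f c) * (g z - g d) = (f c - f d) * (g d - g c)"
    if "fgh_system f g" "generic_fields f g" for f g
    using that TL \<open>z \<in> TL\<close>
    by (auto intro!: fgh_triangle_product_form simp: a_def d_def c_def omega_squared)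
  have "c \<noteq> a" "a \<noteq> d"
    using omega_neq by (auto simp: a_def d_def c_def)
  then have "v a \<noteq> v d" "(u c - u a) * (v a - v c) \<noteq> 0"
    using gen(1) TL unfolding generic_fields_def inj_on_def by auto
  then have "u z = u' z \<and> v z = v' z"
    using relations[OF fgh(1) gen(1)] relations[OF fgh(2) gen(2)] agree
    by (intro bilinear_pair_unique_solution[where c = "u c" and a = "v a" and b = "v d"])
      (auto simp: agree_at_def a_def d_def c_def)
  then show ?thesis unfolding agree_at_def .
qed

lemma fgh_system_point_reflection:
  assumes "fgh_system u v" and "generic_fields u v"
  shows "fgh_system (v \<circ> (\<lambda>z. 1 - z)) (u \<circ> (\<lambda>z. 1 - z))"
  unfolding fgh_system_def comp_def
proof (intro ballI impI)
  fix z1 z2 z3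
  assume "z1 \<in> TL" "z2 \<in> TL" "z3 \<in> TL"
    and steps: "z2 - z1 \<in> {1, omega, omega ^ 2} \<and> z3 - z2 \<in> {1, omega, omega ^ 2} \<and>
      z1 - z3 \<in> {1, omega, omega ^ 2}"
  define w1 w2 w3 where "w1 = 1 - z1" and "w2 = 1 - z2" and "w3 = 1 - z3"
  have TL: "w1 \<in> TL" "w2 \<in> TL" "w3 \<in> TL"
    using \<open>z1 \<in> TL\<close> \<open>z2 \<in> TL\<close> \<open>z3 \<in> TL\<close> by (simp_all add: w1_def w2_def w3_def TL_diff one_in_TL)
  have "w1 \<noteq> w2" "w2 \<noteq> w3" "w3 \<noteq> w1"
    using steps zero_notin_lattice_steps by (force simp: w1_def w2_def w3_def)+
  then have "u w1 \<noteq> u w3" "u w2 \<noteq> u w3" "v w1 \<noteq> v w2" "v w2 \<noteq> v w3"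
    using assms(2) TL unfolding generic_fields_def inj_on_def by metis+
  \<comment> \<open>the reflection reverses orientation: \<open>(w1, w3, w2)\<close> is an elementary triangle\<close>
  moreover have "(u w3 - u w1) / (u w2 - u w3) = (v w2 - v w3) / (v w1 - v w2)"
    using assms(1) TL steps unfolding fgh_system_def w1_def w2_def w3_def by auto
  ultimately show "(v (1 - z2) - v (1 - z1)) / (v (1 - z3) - v (1 - z2)) =
      (u (1 - z3) - u (1 - z2)) / (u (1 - z1) - u (1 - z3))"
    by (simp add: w1_def w2_def w3_def field_simps)
qed

lemma generic_fields_point_reflection:
  assumes "generic_fields u v"
  shows "generic_fields (v \<circ> (\<lambda>z. 1 - z)) (u \<circ> (\<lambda>z. 1 - z))"
proof -
  have "inj_on (\<lambda>z. 1 - z) TL" "(\<lambda>z. 1 - z) ` TL \<subseteq> TL"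
    by (auto intro: inj_onI TL_diff one_in_TL)
  then show ?thesis
    using assms unfolding generic_fields_def by (metis comp_inj_on inj_on_subset)
qed

lemma zigzag_point_reflection:
  assumes "z \<in> zigzag" shows "1 - z \<in> zigzag"
proof -
  obtain i j where "z = lattice_pt i j" "i + j = 0 \<or> i + j = 1"
    using assms unfolding zigzag_def lattice_pt_def by blast
  then have "1 - z = lattice_pt (1 - i) (- j)" "(1 - i) + (- j) = 0 \<or> (1 - i) + (- j) = 1"
    by (auto simp: one_minus_lattice_pt)
  then show ?thesis unfolding zigzag_def lattice_pt_def by blast
qed

lemma lattice_pt_in_semi_axes: "k = 0 \<or> l = 0 \<Longrightarrow> lattice_pt (int k) (int l) \<in> semi_axes"
  unfolding semi_axes_def lattice_pt_def by auto

lemma agree_on_half_plane: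
  assumes "fgh_system u v" "fgh_system u' v'" "generic_fields u v" "generic_fields u' v'"
    and zigzag: "\<forall>z\<in>zigzag. agree_at u v u' v' z"
    and "0 \<le> i + j"
  shows "agree_at u v u' v' (lattice_pt i j)"
proof -
  have base: "agree_at u v u' v' (lattice_pt i j)" if "i + j = 0 \<or> i + j = 1" for i j
    using zigzag that unfolding zigzag_def lattice_pt_def by blast
  have "\<forall>i j. i + j = int n \<longrightarrow> agree_at u v u' v' (lattice_pt i j)" for n
  proof (induction n rule: induct_nat_012)
    case (ge2 n)
    show ?case
    proof (intro allI impI)
      fix i j assume "i + j = int (Suc (Suc n))"
      with ge2 show "agree_at u v u' v' (lattice_pt i j)"
        by (intro rhombus_apex_agree[OF assms(1-4) lattice_pt_in_TL]) simp_all
    qed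
  qed (use base in simp_all)
  then show ?thesis using \<open>0 \<le> i + j\<close> by (metis nonneg_eq_int)
qed

lemma agree_on_lower_half_plane:
  assumes "fgh_system u v" "fgh_system u' v'" "generic_fields u v" "generic_fields u' v'"
    and zigzag: "\<forall>z\<in>zigzag. agree_at u v u' v' z"
    and "i + j \<le> 1"
  shows "agree_at u v u' v' (lattice_pt i j)"
proof -
  let ?\<rho> = "\<lambda>z. 1 - z"
  have "\<forall>z\<in>zigzag. agree_at (v \<circ> ?\<rho>) (u \<circ> ?\<rho>) (v' \<circ> ?\<rho>) (u' \<circ> ?\<rho>) z"
    using zigzag zigzag_point_reflection by (auto simp: agree_at_def)
  from agree_on_half_plane[OF fgh_system_point_reflection[OF assms(1,3)]
      fgh_system_point_reflection[OF assms(2,4)] generic_fields_point_reflection[OF assms(3)]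
      generic_fields_point_reflection[OF assms(4)] this, of "1 - i" "- j"]
  show ?thesis
    using \<open>i + j \<le> 1\<close> by (auto simp: agree_at_def one_minus_lattice_pt)
qed

lemma agree_on_sector:
  assumes "fgh_system u v" "fgh_system u' v'" "generic_fields u v" "generic_fields u' v'"
    and axes: "\<forall>z\<in>semi_axes. agree_at u v u' v' z"
  shows "agree_at u v u' v' (lattice_pt (int k) (int l))"
proof (induction k arbitrary: l)
  case 0
  then show ?case using axes lattice_pt_in_semi_axes by blast
next
  case (Suc k)
  note row_k = Suc.IH
  show ?case
  proof (induction l)
    case 0
    show ?case using axes lattice_pt_in_semi_axes by blast
  next
    case (Suc l)
    show ?case
      using Suc.IH row_k[of l] row_k[of "Suc l"]
      by (intro rhombus_apex_agree[OF assms(1-4) lattice_pt_in_TL]) simp_all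
  qed
qed

theorem proposition9:
  fixes u v u' v' :: "complex \<Rightarrow> complex"
  assumes "fgh_system u v" and "fgh_system u' v'"
    and "generic_fields u v" and "generic_fields u' v'"
  shows "((\<forall>z\<in>zigzag. u z = u' z \<and> v z = v' z) \<longrightarrow> (\<forall>z\<in>TL. u z = u' z \<and> v z = v' z))
       \<and> ((\<forall>z\<in>semi_axes. u z = u' z \<and> v z = v' z) \<longrightarrow> (\<forall>z\<in>sector. u z = u' z \<and> v z = v' z))"
  unfolding agree_at_def[symmetric]
proof (intro conjI impI ballI)
  fix z assume "\<forall>z\<in>zigzag. agree_at u v u' v' z" and "z \<in> TL"
  moreover obtain i j where "z = lattice_pt i j"
    using \<open>z \<in> TL\<close> TL_iff_lattice_pt by blast
  ultimately show "agree_at u v u' v' z"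
    using agree_on_half_plane[OF assms] agree_on_lower_half_plane[OF assms]
    by (cases "0 \<le> i + j") auto
next
  fix z assume "\<forall>z\<in>semi_axes. agree_at u v u' v' z" and "z \<in> sector"
  then show "agree_at u v u' v' z"
    using agree_on_sector[OF assms] unfolding sector_def lattice_pt_def by auto
qed

end
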